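(* Let $\theta\in\,]0,1[$ be fixed and, for $n\in\mathbb{N}$, let $m=\lfloor\theta n\rfloor$. Then $$\sup_{n\in\mathbb{N},\ \lfloor\theta n\rfloor\ge1}\Lambda_n^m<\infty,\qquad\text{where }\Lambda_n^m=\sup_{|x|\le1}\int_{-1}^1|s_n^m(x,y)|\,w(y)\,dy .$$
   Context: Let $w(x)=(1-x^2)^{-1/2}$ on $[-1,1]$ and $\langle f,g\rangle_{L^2_w}=\int_{-1}^1 fgw\,dx$. The orthonormal Chebyshev polynomials are $p_0=\sqrt{1/\pi}$ and $p_r(x)=\sqrt{2/\pi}\cos(r\arccos x)$, $r\ge1$. Chebyshev nodes: $x_k^n=\cos\frac{(2k-1)\pi}{2n}$, $k=1,\ldots,n$. For $0<m<n$: $\mu_{n,r}^m=1$ if $0\le r\le n-m$, $\mu_{n,r}^m=\frac{m+n-r}{2m}$ if $n-m<r<n+m$, $0$ otherwise; for $r=0,\ldots,n-1$, $q_{n,r}^m=p_r$ if $r\le n-m$ and $q_{n,r}^m=\mu_{n,r}^m p_r-\mu_{n,2n-r}^m p_{2n-r}$ if $n-m<r<n$; $\nu_{n,r}^m=1$ if $r\le n-m$ and $\nu_{n,r}^m=\frac{m^2+(n-r)^2}{2m^2}$ if $n-m<r<n$. The orthonormal VP scaling functions are $\tilde\varphi_{n,k}^m=\sum_{r=0}^{n-1}\sqrt{\frac{\pi}{n\nu_{n,r}^m}}p_r(x_k^n)q_{n,r}^m$, $k=1,\dots,n$, and the kernel of the corresponding orthogonal projection is $s_n^m(x,y)=\sum_{k=1}^n\tilde\varphi_{n,k}^m(x)\tilde\varphi_{n,k}^m(y)$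 (equivalently $\sum_{r=0}^{n-1}q_{n,r}^m(x)q_{n,r}^m(y)/\nu_{n,r}^m$). *)

theory Defs
  imports "HOL-Analysis.Analysis"
begin

definition cheb_w :: "real \<Rightarrow> real" where
  "cheb_w x = 1 / sqrt (1 - x\<^sup>2)"

definition cheb_p :: "nat \<Rightarrow> real \<Rightarrow> real" where
  "cheb_p r x = (if r = 0 then sqrt (1 / pi) else sqrt (2 / pi) * cos (real r * arccos x))"

definition cheb_node :: "nat \<Rightarrow> nat \<Rightarrow> real" where
  "cheb_node n k = cos ((2 * real k - 1) * pi / (2 * real n))"

definition vp_mu :: "nat \<Rightarrow> nat \<Rightarrow> nat \<Rightarrow> real" where
  "vp_mu n m r =
     (if real r \<le> real n - real m then 1
      else if real n - real m < real r \<and> real r < real n + real m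
        then (real m + real n - real r) / (2 * real m)
      else 0)"

definition vp_q :: "nat \<Rightarrow> nat \<Rightarrow> nat \<Rightarrow> real \<Rightarrow> real" where
  "vp_q n m r x =
     (if real r \<le> real n - real m then cheb_p r x
      else vp_mu n m r * cheb_p r x - vp_mu n m (2 * n - r) * cheb_p (2 * n - r) x)"

definition vp_nu :: "nat \<Rightarrow> nat \<Rightarrow> nat \<Rightarrow> real" where
  "vp_nu n m r =
     (if real r \<le> real n - real m then 1
      else (real m ^ 2 + (real n - real r) ^ 2) / (2 * real m ^ 2))"

definition vp_phi :: "nat \<Rightarrow> nat \<Rightarrow> nat \<Rightarrow> real \<Rightarrow> real" where
  "vp_phi n m k x =
     (\<Sum>r<n. sqrt (pi / (real n * vp_nu n m r)) * cheb_p r (cheb_node n k) * vp_q n m r x)"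

definition vp_kernel :: "nat \<Rightarrow> nat \<Rightarrow> real \<Rightarrow> real \<Rightarrow> real" where
  "vp_kernel n m x y = (\<Sum>k=1..n. vp_phi n m k x * vp_phi n m k y)"

definition vp_Lambda :: "nat \<Rightarrow> nat \<Rightarrow> ennreal" where
  "vp_Lambda n m =
     (SUP x\<in>{-1..1}. \<integral>\<^sup>+ y. ennreal (\<bar>vp_kernel n m x y\<bar> * cheb_w y) * indicator {-1..1} y \<partial>lborel)"

end

theory Submission
  imports Defs
begin

(* Write x = cos t and y = cos s. Discrete orthogonality of the Chebyshev polynomials at the
   nodes gives s_n^m(x, y) = sum_r q_r(x) q_r(y) / nu_r, and product-to-sum formulas turn
   pi s_n^m(cos t, cos s) into C(t - s) + C(t + s) - 2 cos(n(t - s)) D(t + s) - 2 cos(n(t + s)) D(t - s)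
   for two cosine polynomials C of degree n + m and D of degree m. Their coefficients are samples,
   at unit spacing, of rational profiles living on the scale m, so their second differences are
   O(1/m^2), and those of C vanish outside a window of length 2m + 1. Summing by parts twice
   bounds a cosine polynomial by sum_k |second difference at k| F_k with nonnegative Fejer sums F_k
   whose integral over a period is (k + 1) pi. Hence the L^1 norms of C and D over a half period
   are O(n/m) and O(1). As w(cos s) |sin s| = 1, the Lebesgue constant is an L^1 norm in s, hence
   O(n/m) = O(1/theta) when m = floor(theta n). *)

section \<open>Discrete orthogonality at the Chebyshev nodes\<close>

lemma sum_cos_odd_multiples:
  fixes a :: real
  shows "2 * sin a * (\<Sum>k=1..N. cos ((2 * real k - 1) * a)) = sin (2 * real N * a)"
proof (induction N)
  case (Suc N)
  have "2 * sin a * cos ((2 * real (Suc N) - 1) * a) = sin (2 * real (Suc N) * a) - sin (2 * real N * a)"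
    using sin_times_cos[of a "(2 * real (Suc N) - 1) * a"] by (simp add: algebra_simps)
  then show ?case using Suc by (simp add: distrib_left)
qed simp

definition cheb_angle :: "nat \<Rightarrow> nat \<Rightarrow> real" where
  "cheb_angle n k = (2 * real k - 1) * pi / (2 * real n)"

lemma cheb_node_eq_cos: "cheb_node n k = cos (cheb_angle n k)"
  by (simp add: cheb_node_def cheb_angle_def)

lemma cheb_angle_bounds:
  assumes "1 \<le> k" "k \<le> n"
  shows "0 \<le> cheb_angle n k" "cheb_angle n k \<le> pi"
proof -
  have "pi * (2 * real k - 1) \<le> pi * (2 * real n)" using assms by (intro mult_left_mono) auto
  then show "0 \<le> cheb_angle n k" "cheb_angle n k \<le> pi"
    using assms by (auto simp: cheb_angle_def field_simps)
qed

lemma sum_cos_cheb_angle: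
  assumes "j < 2 * n"
  shows "(\<Sum>k=1..n. cos (real j * cheb_angle n k)) = (if j = 0 then real n else 0)"
proof (cases "j = 0")
  case False
  define a where "a = real j * pi / (2 * real n)"
  have "0 < a" "a < pi" using assms False by (auto simp: a_def field_simps)
  then have "sin a \<noteq> 0" using sin_gt_zero by fastforce
  moreover have "sin (2 * real n * a) = 0" using assms by (simp add: a_def sin_zero_iff_int2)
  ultimately have "(\<Sum>k=1..n. cos ((2 * real k - 1) * a)) = 0"
    using sum_cos_odd_multiples[of a n] by simp
  moreover have "real j * cheb_angle n k = (2 * real k - 1) * a" for k
    by (simp add: a_def cheb_angle_def)
  ultimately show ?thesis using False by simp
qed simp

lemma cheb_p_cos:
  assumes "0 \<le> t" "t \<le> pi"
  shows "cheb_p r (cos t) = (if r = 0 then sqrt (1 / pi) else sqrt (2 / pi) * cos (real r * t))"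
  using assms by (simp add: cheb_p_def arccos_cos)

lemma cos_mult_cos_nat:
  "cos (real r * x) * cos (real s * x) =
     (cos (real (if s \<le> r then r - s else s - r) * x) + cos (real (r + s) * x)) / 2"
proof -
  have "cos (real r * x - real s * x) = cos (real (if s \<le> r then r - s else s - r) * x)"
  proof (cases "s \<le> r")
    case False
    then have "real r * x - real s * x = - (real (s - r) * x)" by (simp add: of_nat_diff algebra_simps)
    then show ?thesis using False by simp
  qed (simp add: of_nat_diff algebra_simps)
  then show ?thesis by (simp add: cos_times_cos distrib_right)
qed

lemma sum_cos_mult_cos_cheb_angle:
  assumes "r < n" "s < n"
  shows "(\<Sum>k=1..n. cos (real r * cheb_angle n k) * cos (real s * cheb_angle n k)) =
     (if r = s then (if r = 0 then real n else real n / 2) else 0)"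
proof -
  have "(\<Sum>k=1..n. cos (real r * cheb_angle n k) * cos (real s * cheb_angle n k)) =
     ((\<Sum>k=1..n. cos (real (if s \<le> r then r - s else s - r) * cheb_angle n k)) +
      (\<Sum>k=1..n. cos (real (r + s) * cheb_angle n k))) / 2"
    by (simp only: cos_mult_cos_nat sum.distrib flip: sum_divide_distrib)
  also have "\<dots> = (if r = s then (if r = 0 then real n else real n / 2) else 0)"
    using assms by (subst sum_cos_cheb_angle, simp)+ auto
  finally show ?thesis .
qed

lemma cheb_p_nodes_orthogonal:
  assumes "r < n" "s < n"
  shows "(\<Sum>k=1..n. cheb_p r (cheb_node n k) * cheb_p s (cheb_node n k)) = (if r = s then real n / pi else 0)"
proof -
  define \<gamma> where "\<gamma> i = (if i = 0 then sqrt (1 / pi) else sqrt (2 / pi))" for i :: nat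
  have "cheb_p i (cheb_node n k) = \<gamma> i * cos (real i * cheb_angle n k)" if "k \<in> {1..n}" for i k
    using that cheb_angle_bounds[of k n] by (simp add: cheb_node_eq_cos cheb_p_cos \<gamma>_def)
  then have "(\<Sum>k=1..n. cheb_p r (cheb_node n k) * cheb_p s (cheb_node n k)) =
     \<gamma> r * \<gamma> s * (\<Sum>k=1..n. cos (real r * cheb_angle n k) * cos (real s * cheb_angle n k))"
    by (simp add: sum_distrib_left mult_ac)
  also have "\<dots> = (if r = s then real n / pi else 0)"
    unfolding sum_cos_mult_cos_cheb_angle[OF assms] by (auto simp: \<gamma>_def real_sqrt_mult[symmetric])
  finally show ?thesis .
qed

lemma vp_nu_pos: "r < n \<Longrightarrow> 0 < vp_nu n m r"
  by (auto simp: vp_nu_def intro!: divide_pos_pos add_pos_nonneg)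

lemma vp_kernel_eq_sum:
  "vp_kernel n m x y = (\<Sum>r<n. vp_q n m r x * vp_q n m r y / vp_nu n m r)"
proof -
  define A where "A r = sqrt (pi / (real n * vp_nu n m r))" for r
  define P where "P r k = cheb_p r (cheb_node n k)" for r k
  have "vp_kernel n m x y = (\<Sum>k=1..n. (\<Sum>r<n. A r * P r k * vp_q n m r x) * (\<Sum>s<n. A s * P s k * vp_q n m s y))"
    by (simp add: vp_kernel_def vp_phi_def A_def P_def)
  also have "\<dots> = (\<Sum>k=1..n. \<Sum>r<n. \<Sum>s<n. (A r * vp_q n m r x * A s * vp_q n m s y) * (P r k * P s k))"
    unfolding sum_product by (intro sum.cong refl) (simp add: algebra_simps)
  also have "\<dots> = (\<Sum>r<n. \<Sum>s<n. (A r * vp_q n m r x * A s * vp_q n m s y) * (\<Sum>k=1..n. P r k * P s k))"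
    unfolding sum_distrib_left by (subst sum.swap, rule sum.cong, rule refl, rule sum.swap)
  also have "\<dots> = (\<Sum>r<n. \<Sum>s<n. (A r * vp_q n m r x * A s * vp_q n m s y) * (if r = s then real n / pi else 0))"
    unfolding P_def by (intro sum.cong refl) (simp only: cheb_p_nodes_orthogonal lessThan_iff)
  also have "\<dots> = (\<Sum>r<n. (A r * A r * real n / pi) * (vp_q n m r x * vp_q n m r y))"
    by (simp add: if_distrib mult_ac cong: if_cong)
  also have "\<dots> = (\<Sum>r<n. vp_q n m r x * vp_q n m r y / vp_nu n m r)"
  proof (rule sum.cong)
    fix r assume "r \<in> {..<n}"
    then have pos: "0 < real n" "0 < vp_nu n m r" using vp_nu_pos[of r n m] by auto
    then have "A r * A r = pi / (real n * vp_nu n m r)"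
      by (simp add: A_def)
    with pos show "(A r * A r * real n / pi) * (vp_q n m r x * vp_q n m r y) =
        vp_q n m r x * vp_q n m r y / vp_nu n m r"
      by (simp add: field_simps)
  qed simp
  finally show ?thesis .
qed

section \<open>Cosine polynomials and summation by parts\<close>

definition cos_term :: "nat \<Rightarrow> real \<Rightarrow> real" where
  "cos_term i u = (if i = 0 then 1 / 2 else cos (real i * u))"

definition cos_poly :: "(nat \<Rightarrow> real) \<Rightarrow> nat \<Rightarrow> real \<Rightarrow> real" where
  "cos_poly c N u = (\<Sum>k\<le>N. c k * cos_term k u)"

definition dirichlet :: "nat \<Rightarrow> real \<Rightarrow> real" where
  "dirichlet j u = (\<Sum>i\<le>j. cos_term i u)"

text \<open>\<open>k + 1\<close> times the Fejer kernel of order \<open>k\<close>.\<close>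
definition fejer :: "nat \<Rightarrow> real \<Rightarrow> real" where
  "fejer k u = (\<Sum>j\<le>k. dirichlet j u)"

definition second_diff :: "(nat \<Rightarrow> real) \<Rightarrow> nat \<Rightarrow> real" where
  "second_diff c k = c k - 2 * c (Suc k) + c (Suc (Suc k))"

definition abel_norm :: "(nat \<Rightarrow> real) \<Rightarrow> nat \<Rightarrow> real" where
  "abel_norm c N = (\<Sum>k\<le>N. real (Suc k) * \<bar>second_diff c k\<bar>)"

lemma cos_term_minus [simp]: "cos_term i (- u) = cos_term i u"
  by (simp add: cos_term_def)

lemma cos_poly_minus [simp]: "cos_poly c N (- u) = cos_poly c N u"
  by (simp add: cos_poly_def)

lemma continuous_on_cos_term [continuous_intros]:
  fixes f :: "'a::t2_space \<Rightarrow> real"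
  assumes "continuous_on S f"
  shows "continuous_on S (\<lambda>s. cos_term i (f s))"
  unfolding cos_term_def by (cases "i = 0") (auto intro!: continuous_intros assms)

lemma continuous_on_cos_poly [continuous_intros]:
  fixes f :: "'a::t2_space \<Rightarrow> real"
  assumes "continuous_on S f"
  shows "continuous_on S (\<lambda>s. cos_poly c N (f s))"
  unfolding cos_poly_def by (intro continuous_intros assms)

lemma continuous_on_fejer [continuous_intros]:
  fixes f :: "'a::t2_space \<Rightarrow> real"
  assumes "continuous_on S f"
  shows "continuous_on S (\<lambda>s. fejer k (f s))"
  unfolding fejer_def dirichlet_def by (intro continuous_intros assms)

lemma dirichlet_mult_one_minus_cos:
  "dirichlet j u * (1 - cos u) = (cos (real j * u) - cos (real (Suc j) * u)) / 2"
proof (induction j)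
  case (Suc j)
  have "cos (real (Suc j) * u) * cos u = (cos (real j * u) + cos (real (Suc (Suc j)) * u)) / 2"
    using cos_times_cos[of "real (Suc j) * u" u] by (simp add: algebra_simps)
  then show ?case using Suc by (simp add: dirichlet_def cos_term_def algebra_simps)
qed (simp add: dirichlet_def cos_term_def)

lemma fejer_mult_one_minus_cos: "fejer k u * (1 - cos u) = (1 - cos (real (Suc k) * u)) / 2"
proof (induction k)
  case (Suc k)
  have "fejer (Suc k) u = fejer k u + dirichlet (Suc k) u" by (simp add: fejer_def)
  then show ?case using Suc dirichlet_mult_one_minus_cos[of "Suc k" u] by (simp add: algebra_simps)
qed (simp add: fejer_def dirichlet_mult_one_minus_cos)

lemma fejer_nonneg: "0 \<le> fejer k u"
proof (cases "cos u = 1")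
  case True
  then obtain z :: int where z: "u = of_int z * 2 * pi" using cos_one_2pi_int by auto
  have "cos (real i * u) = 1" for i
    using cos_int_2pin[of "int i * z"] by (simp add: z algebra_simps)
  then show ?thesis by (auto simp: fejer_def dirichlet_def cos_term_def intro!: sum_nonneg)
next
  case False
  then have "0 < 1 - cos u" using cos_le_one[of u] by linarith
  moreover have "0 \<le> fejer k u * (1 - cos u)"
    unfolding fejer_mult_one_minus_cos using cos_le_one[of "real (Suc k) * u"] by simp
  ultimately show ?thesis by (simp add: zero_le_mult_iff)
qed

lemma has_integral_cos_term_period:
  "((\<lambda>s. cos_term i (s + b)) has_integral (if i = 0 then pi else 0)) {0..2 * pi}"
proof (cases "i = 0")
  case False
  define F where "F s = sin (real i * (s + b)) / real i" for s
  have "(F has_vector_derivative cos (real i * (s + b))) (at s within {0..2 * pi})" for s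
    unfolding F_def has_real_derivative_iff_has_vector_derivative[symmetric] using False
    by (auto intro!: derivative_eq_intros)
  then have "((\<lambda>s. cos (real i * (s + b))) has_integral (F (2 * pi) - F 0)) {0..2 * pi}"
    by (intro fundamental_theorem_of_calculus) auto
  moreover have "F (2 * pi) = F 0"
  proof -
    have "real i * (2 * pi + b) = real i * b + 2 * real i * pi" by (simp add: algebra_simps)
    then show ?thesis by (simp add: F_def sin_add)
  qed
  ultimately show ?thesis using False by (simp add: cos_term_def)
qed (use has_integral_const_real[of "1 / 2 :: real" 0 "2 * pi"] in \<open>simp add: cos_term_def\<close>)

lemma has_integral_fejer_period:
  "((\<lambda>s. fejer k (s + b)) has_integral (real (Suc k) * pi)) {0..2 * pi}"
proof -
  have "((\<lambda>s. fejer k (s + b)) has_integral (\<Sum>j\<le>k. \<Sum>i\<le>j. if i = 0 then pi else 0)) {0..2 * pi}"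
    unfolding fejer_def dirichlet_def by (intro has_integral_sum finite_atMost has_integral_cos_term_period)
  then show ?thesis by simp
qed

lemma integral_fejer_half_period_le:
  "integral {0..pi} (\<lambda>s. fejer k (s + b)) \<le> real (Suc k) * pi"
proof -
  have "integral {0..pi} (\<lambda>s. fejer k (s + b)) \<le> integral {0..2 * pi} (\<lambda>s. fejer k (s + b))"
    using has_integral_fejer_period fejer_nonneg
    by (intro integral_subset_le integrable_continuous_interval continuous_intros) auto
  then show ?thesis using integral_unique[OF has_integral_fejer_period] by simp
qed

lemma cos_poly_summation_by_parts:
  "cos_poly c N u = (\<Sum>k\<le>N. second_diff c k * fejer k u)
     + (c (Suc N) - c (Suc (Suc N))) * fejer N u + c (Suc N) * dirichlet N u"
proof (induction N)
  case (Suc N)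
  then show ?case
    by (simp add: cos_poly_def fejer_def dirichlet_def second_diff_def algebra_simps)
qed (simp add: cos_poly_def second_diff_def fejer_def dirichlet_def algebra_simps)

lemma abs_cos_poly_le_fejer:
  assumes "c (Suc N) = 0" "c (Suc (Suc N)) = 0"
  shows "\<bar>cos_poly c N u\<bar> \<le> (\<Sum>k\<le>N. \<bar>second_diff c k\<bar> * fejer k u)"
proof -
  have "\<bar>cos_poly c N u\<bar> = \<bar>\<Sum>k\<le>N. second_diff c k * fejer k u\<bar>"
    using cos_poly_summation_by_parts[of c N u] assms by simp
  also have "\<dots> \<le> (\<Sum>k\<le>N. \<bar>second_diff c k * fejer k u\<bar>)" by (rule sum_abs)
  also have "\<dots> = (\<Sum>k\<le>N. \<bar>second_diff c k\<bar> * fejer k u)" by (simp add: abs_mult fejer_nonneg)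
  finally show ?thesis .
qed

lemma integral_abs_cos_poly_le:
  assumes "c (Suc N) = 0" "c (Suc (Suc N)) = 0"
  shows "integral {0..pi} (\<lambda>s. \<bar>cos_poly c N (s + b)\<bar>) \<le> pi * abel_norm c N"
proof -
  have "integral {0..pi} (\<lambda>s. \<bar>cos_poly c N (s + b)\<bar>)
      \<le> integral {0..pi} (\<lambda>s. \<Sum>k\<le>N. \<bar>second_diff c k\<bar> * fejer k (s + b))"
    using abs_cos_poly_le_fejer[OF assms]
    by (intro integral_le integrable_continuous_interval continuous_intros) auto
  also have "\<dots> = (\<Sum>k\<le>N. \<bar>second_diff c k\<bar> * integral {0..pi} (\<lambda>s. fejer k (s + b)))"
    by (simp add: integral_sum integrable_continuous_interval continuous_intros)
  also have "\<dots> \<le> (\<Sum>k\<le>N. \<bar>second_diff c k\<bar> * (real (Suc k) * pi))"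
    by (intro sum_mono mult_left_mono integral_fejer_half_period_le) auto
  also have "\<dots> = pi * abel_norm c N"
    by (simp add: abel_norm_def sum_distrib_left mult_ac)
  finally show ?thesis .
qed

section \<open>Second differences of smooth functions\<close>

lemma abs_second_diff_le:
  fixes F F' F'' :: "real \<Rightarrow> real"
  assumes F': "\<And>y. (F has_real_derivative F' y) (at y)"
    and F'': "\<And>y. (F' has_real_derivative F'' y) (at y)"
    and bound: "\<And>y. \<bar>F'' y\<bar> \<le> B" and "0 < h"
  shows "\<bar>F x - 2 * F (x + h) + F (x + 2 * h)\<bar> \<le> B * h\<^sup>2"
proof -
  define \<phi> where "\<phi> y = F (y + h) - F y" for y
  have \<phi>': "(\<phi> has_real_derivative (F' (y + h) - F' y)) (at y)" for y
    unfolding \<phi>_def using F'[of "y + h"] by (intro DERIV_diff F') (simp add: DERIV_shift)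
  obtain z where "\<phi> (x + h) - \<phi> x = h * (F' (z + h) - F' z)"
    using MVT2[of x "x + h" \<phi> "\<lambda>y. F' (y + h) - F' y"] \<open>0 < h\<close> \<phi>' by auto
  moreover obtain w where "F' (z + h) - F' z = h * F'' w"
    using MVT2[of z "z + h" F' F''] \<open>0 < h\<close> F'' by auto
  moreover have "F x - 2 * F (x + h) + F (x + 2 * h) = \<phi> (x + h) - \<phi> x"
    by (simp add: \<phi>_def add.assoc flip: mult_2)
  ultimately have "\<bar>F x - 2 * F (x + h) + F (x + 2 * h)\<bar> = h * h * \<bar>F'' w\<bar>"
    using \<open>0 < h\<close> by (simp add: abs_mult)
  also have "\<dots> \<le> h * h * B" using bound[of w] by (intro mult_left_mono) auto
  finally show ?thesis by (simp add: power2_eq_square mult_ac)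
qed

lemma abs_le_one_plus_square: "\<bar>y\<bar> \<le> 1 + y\<^sup>2" for y :: real
  using sum_power2_ge_zero[of "\<bar>y\<bar> - 1/2" 0] by (simp add: power2_eq_square algebra_simps)

lemma one_plus_square_le_cube: "1 + y\<^sup>2 \<le> (1 + y\<^sup>2) ^ 3" for y :: real
  by (rule power_increasing[of 1 3, simplified]) simp

lemma abs_second_diff_frac_le:
  fixes x h :: real
  assumes "0 < h"
  shows "\<bar>x / (1 + x\<^sup>2) - 2 * ((x + h) / (1 + (x + h)\<^sup>2)) + (x + 2 * h) / (1 + (x + 2 * h)\<^sup>2)\<bar> \<le> 8 * h\<^sup>2"
proof (rule abs_second_diff_le[OF _ _ _ assms])
  fix y :: real
  have pos: "0 < 1 + y\<^sup>2" by (simp add: add_pos_nonneg)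
  show "((\<lambda>y. y / (1 + y\<^sup>2)) has_real_derivative (1 - y\<^sup>2) / (1 + y\<^sup>2)\<^sup>2) (at y)"
    using pos by (auto intro!: derivative_eq_intros simp: power2_eq_square field_simps)
  have "((\<lambda>y. (1 - y\<^sup>2) / (1 + y\<^sup>2)\<^sup>2) has_real_derivative
      (- (2 * y) * (1 + y\<^sup>2)\<^sup>2 - (1 - y\<^sup>2) * (2 * (1 + y\<^sup>2) * (2 * y))) / ((1 + y\<^sup>2)\<^sup>2)\<^sup>2) (at y)"
    using pos by (auto intro!: derivative_eq_intros simp: power2_eq_square)
  moreover have "(- (2 * y) * (1 + y\<^sup>2)\<^sup>2 - (1 - y\<^sup>2) * (2 * (1 + y\<^sup>2) * (2 * y))) / ((1 + y\<^sup>2)\<^sup>2)\<^sup>2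
      = (1 + y\<^sup>2) * (2 * y ^ 3 - 6 * y) / ((1 + y\<^sup>2) * (1 + y\<^sup>2) ^ 3)"
    by (simp add: power2_eq_square power3_eq_cube algebra_simps)
  ultimately show "((\<lambda>y. (1 - y\<^sup>2) / (1 + y\<^sup>2)\<^sup>2) has_real_derivative (2 * y ^ 3 - 6 * y) / (1 + y\<^sup>2) ^ 3) (at y)"
    using pos by simp
  have "\<bar>2 * y ^ 3 - 6 * y\<bar> \<le> 2 * \<bar>y\<bar> ^ 3 + 6 * \<bar>y\<bar>"
    by (simp add: abs_mult power_abs[symmetric] order_trans[OF abs_triangle_ineq4])
  also have "\<dots> \<le> 8 * (1 + y\<^sup>2) ^ 3"
    using power_mono[OF abs_le_one_plus_square[of y], of 3] abs_le_one_plus_square[of y]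
      one_plus_square_le_cube[of y] by linarith
  finally show "\<bar>(2 * y ^ 3 - 6 * y) / (1 + y\<^sup>2) ^ 3\<bar> \<le> 8"
    using pos by (simp add: abs_div divide_le_eq)
qed

lemma abs_second_diff_inverse_le:
  fixes x h :: real
  assumes "0 < h"
  shows "\<bar>1 / (1 + x\<^sup>2) - 2 * (1 / (1 + (x + h)\<^sup>2)) + 1 / (1 + (x + 2 * h)\<^sup>2)\<bar> \<le> 6 * h\<^sup>2"
proof (rule abs_second_diff_le[OF _ _ _ assms])
  fix y :: real
  have pos: "0 < 1 + y\<^sup>2" by (simp add: add_pos_nonneg)
  show "((\<lambda>y. 1 / (1 + y\<^sup>2)) has_real_derivative - 2 * y / (1 + y\<^sup>2)\<^sup>2) (at y)"
    using pos by (auto intro!: derivative_eq_intros simp: power2_eq_square field_simps)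
  have "((\<lambda>y. - 2 * y / (1 + y\<^sup>2)\<^sup>2) has_real_derivative
      (- 2 * (1 + y\<^sup>2)\<^sup>2 - (- 2 * y) * (2 * (1 + y\<^sup>2) * (2 * y))) / ((1 + y\<^sup>2)\<^sup>2)\<^sup>2) (at y)"
    using pos by (auto intro!: derivative_eq_intros simp: power2_eq_square)
      (simp add: minus_divide_left field_simps algebra_simps)
  moreover have "(- 2 * (1 + y\<^sup>2)\<^sup>2 - (- 2 * y) * (2 * (1 + y\<^sup>2) * (2 * y))) / ((1 + y\<^sup>2)\<^sup>2)\<^sup>2
      = (1 + y\<^sup>2) * (6 * y\<^sup>2 - 2) / ((1 + y\<^sup>2) * (1 + y\<^sup>2) ^ 3)"
    by (simp add: power2_eq_square power3_eq_cube algebra_simps)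
  ultimately show "((\<lambda>y. - 2 * y / (1 + y\<^sup>2)\<^sup>2) has_real_derivative (6 * y\<^sup>2 - 2) / (1 + y\<^sup>2) ^ 3) (at y)"
    using pos by simp
  have "\<bar>6 * y\<^sup>2 - 2\<bar> \<le> 6 * (1 + y\<^sup>2)" by (simp add: abs_le_iff)
  also have "\<dots> \<le> 6 * (1 + y\<^sup>2) ^ 3" using one_plus_square_le_cube[of y] by simp
  finally have "\<bar>6 * y\<^sup>2 - 2\<bar> \<le> 6 * (1 + y\<^sup>2) ^ 3" .
  then show "\<bar>(6 * y\<^sup>2 - 2) / (1 + y\<^sup>2) ^ 3\<bar> \<le> 6"
    using pos by (simp add: abs_div divide_le_eq)
qed

section \<open>The coefficients and their second differences\<close>

text \<open>For \<open>0 < j < m\<close> the weights of \<open>q_(n-j) = \<mu>_(n-j) p_(n-j) - \<mu>_(n+j) p_(n+j)\<close> give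
  \<open>c_profile m (-j) = \<mu>_(n-j)^2 / \<nu>_(n-j)\<close>, \<open>c_profile m j = \<mu>_(n+j)^2 / \<nu>_(n-j)\<close> and
  \<open>d_profile m j = \<mu>_(n-j) \<mu>_(n+j) / \<nu>_(n-j)\<close>.\<close>
definition c_profile :: "real \<Rightarrow> real \<Rightarrow> real" where
  "c_profile m d = (m - d)\<^sup>2 / (2 * (m\<^sup>2 + d\<^sup>2))"

definition d_profile :: "real \<Rightarrow> real \<Rightarrow> real" where
  "d_profile m d = (m\<^sup>2 - d\<^sup>2) / (2 * (m\<^sup>2 + d\<^sup>2))"

definition vp_c :: "nat \<Rightarrow> nat \<Rightarrow> nat \<Rightarrow> real" where
  "vp_c n m k =
     (if real k \<le> real n - real m then 1
      else if real n + real m \<le> real k then 0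
      else c_profile (real m) (real k - real n))"

definition vp_d :: "nat \<Rightarrow> nat \<Rightarrow> real" where
  "vp_d m j = (if m \<le> j then 0 else d_profile (real m) (real j))"

lemma c_profile_eq: "0 < m \<Longrightarrow> c_profile m d = 1 / 2 - (d / m) / (1 + (d / m)\<^sup>2)"
  by (simp add: c_profile_def field_simps power2_eq_square)

lemma d_profile_eq: "0 < m \<Longrightarrow> d_profile m d = 1 / (1 + (d / m)\<^sup>2) - 1 / 2"
  by (simp add: d_profile_def field_simps power2_eq_square)

lemma c_profile_minus:
  assumes "0 < m"
  shows "c_profile m (- d) = 1 - c_profile m d"
proof -
  have "c_profile m (- d) + c_profile m d = ((m + d)\<^sup>2 + (m - d)\<^sup>2) / (2 * (m\<^sup>2 + d\<^sup>2))"
    by (simp add: c_profile_def add_divide_distrib)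
  also have "(m + d)\<^sup>2 + (m - d)\<^sup>2 = 2 * (m\<^sup>2 + d\<^sup>2)"
    by (simp add: power2_eq_square algebra_simps)
  finally have "c_profile m (- d) + c_profile m d = 1"
    using assms by (simp add: add_nonneg_eq_0_iff)
  then show ?thesis by simp
qed

lemma c_profile_nonneg: "0 \<le> c_profile m d"
  by (simp add: c_profile_def)

lemma c_profile_le:
  assumes "0 < m" "\<bar>m - d\<bar> \<le> 1"
  shows "c_profile m d \<le> 1 / (2 * m\<^sup>2)"
proof -
  have "(m - d)\<^sup>2 \<le> 1" using assms(2) by (simp add: abs_square_le_1)
  moreover have "2 * m\<^sup>2 \<le> 2 * (m\<^sup>2 + d\<^sup>2)" by simp
  ultimately show ?thesis
    unfolding c_profile_def using assms(1)
    by (intro frac_le) (auto simp: add_pos_nonneg)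
qed

lemma abs_second_diff_c_profile_le:
  assumes "0 < m"
  shows "\<bar>c_profile m d - 2 * c_profile m (d + 1) + c_profile m (d + 2)\<bar> \<le> 8 / m\<^sup>2"
proof -
  have "(d + 1) / m = d / m + 1 / m" "(d + 2) / m = d / m + 2 * (1 / m)"
    by (simp_all add: add_divide_distrib)
  then have "\<bar>c_profile m d - 2 * c_profile m (d + 1) + c_profile m (d + 2)\<bar> \<le> 8 * (1 / m)\<^sup>2"
    using abs_second_diff_frac_le[of "1 / m" "d / m"] assms
    by (simp add: c_profile_eq abs_minus_commute[of "1 / 2 - _"] algebra_simps)
  then show ?thesis by (simp add: power_divide)
qed

lemma abs_second_diff_d_profile_le:
  assumes "0 < m"
  shows "\<bar>d_profile m d - 2 * d_profile m (d + 1) + d_profile m (d + 2)\<bar> \<le> 6 / m\<^sup>2"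
proof -
  have "(d + 1) / m = d / m + 1 / m" "(d + 2) / m = d / m + 2 * (1 / m)"
    by (simp_all add: add_divide_distrib)
  then have "\<bar>d_profile m d - 2 * d_profile m (d + 1) + d_profile m (d + 2)\<bar> \<le> 6 * (1 / m)\<^sup>2"
    using abs_second_diff_inverse_le[of "1 / m" "d / m"] assms by (simp add: d_profile_eq)
  then show ?thesis by (simp add: power_divide)
qed

lemma abs_vp_c_minus_c_profile_le:
  assumes "1 \<le> m" "real n - real m - 1 \<le> real k" "real k \<le> real n + real m + 1"
  shows "\<bar>vp_c n m k - c_profile (real m) (real k - real n)\<bar> \<le> 1 / (2 * (real m)\<^sup>2)"
proof -
  define d where "d = real k - real n"
  have m: "0 < real m" using assms(1) by simp
  consider "real k \<le> real n - real m" | "real n + real m \<le> real k"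
    | "\<not> real k \<le> real n - real m" "\<not> real n + real m \<le> real k" by linarith
  then show ?thesis
  proof cases
    case 1
    then have "vp_c n m k - c_profile (real m) d = c_profile (real m) (- d)"
      by (simp add: vp_c_def c_profile_minus[OF m])
    moreover have "c_profile (real m) (- d) \<le> 1 / (2 * (real m)\<^sup>2)"
      using 1 assms by (intro c_profile_le m) (auto simp: d_def)
    ultimately show ?thesis using c_profile_nonneg by (simp add: d_def)
  next
    case 2
    then have "vp_c n m k - c_profile (real m) d = - c_profile (real m) d"
      using m by (simp add: vp_c_def)
    moreover have "c_profile (real m) d \<le> 1 / (2 * (real m)\<^sup>2)"
      using 2 assms by (intro c_profile_le m) (auto simp: d_def)
    ultimately show ?thesis using c_profile_nonneg by (simp add: d_def)
  qed (simp add: vp_c_def)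
qed

lemma abs_second_diff_vp_c_le:
  assumes "1 \<le> m"
  shows "\<bar>second_diff (vp_c n m) k\<bar> \<le> 10 / (real m)\<^sup>2"
proof -
  have m: "0 < real m" using assms by simp
  consider "k + 2 + m \<le> n" | "n + m \<le> k" | "n \<le> k + m + 1" "k + 1 \<le> n + m" by linarith
  then show ?thesis
  proof cases
    case 1
    then have "real (k + 2 + m) \<le> real n" by (simp only: of_nat_le_iff)
    then show ?thesis by (simp add: second_diff_def vp_c_def)
  next
    case 2
    then have "real (n + m) \<le> real k" by (simp only: of_nat_le_iff)
    then show ?thesis using m by (simp add: second_diff_def vp_c_def)
  next
    case 3
    then have "real n \<le> real (k + m + 1)" "real (k + 1) \<le> real (n + m)" by (simp_all only: of_nat_le_iff)
    then have range: "real n - real m - 1 \<le> real k" "real k + 2 \<le> real n + real m + 1" by simp_all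
    define C where "C j = c_profile (real m) (real k - real n + j)" for j :: real
    define E where "E j = vp_c n m (k + j) - C (real j)" for j :: nat
    have "\<bar>E j\<bar> \<le> 1 / (2 * (real m)\<^sup>2)" if "j \<le> 2" for j
      using abs_vp_c_minus_c_profile_le[OF assms, of n "k + j"] that range
      by (simp add: E_def C_def algebra_simps)
    then have "\<bar>E 0\<bar> \<le> 1 / (2 * (real m)\<^sup>2)" "\<bar>E 1\<bar> \<le> 1 / (2 * (real m)\<^sup>2)"
      "\<bar>E 2\<bar> \<le> 1 / (2 * (real m)\<^sup>2)" by auto
    moreover have "\<bar>C 0 - 2 * C 1 + C 2\<bar> \<le> 8 / (real m)\<^sup>2"
      using abs_second_diff_c_profile_le[OF m] by (simp add: C_def add.assoc)
    moreover have "second_diff (vp_c n m) k = (C 0 - 2 * C 1 + C 2) + E 0 - 2 * E 1 + E 2"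
      by (simp add: second_diff_def E_def numeral_2_eq_2)
    ultimately show ?thesis unfolding abs_le_iff by auto
  qed
qed

lemma second_diff_vp_c_eq_0:
  assumes "1 \<le> m" "m < n" "k \<notin> {n - m - 1 .. n + m - 1}"
  shows "second_diff (vp_c n m) k = 0"
proof -
  from assms consider "real k + 2 \<le> real n - real m" | "real n + real m \<le> real k"
    by (force simp: of_nat_diff)
  then show ?thesis using assms(1) by cases (auto simp: second_diff_def vp_c_def)
qed

lemma abel_norm_vp_c_le:
  assumes "1 \<le> m" "m < n"
  shows "abel_norm (vp_c n m) (n + m) \<le> 60 * real n / real m"
proof -
  define I where "I = {n - m - 1 .. n + m - 1}"
  define C where "C = real (n + m + 1) * (10 / (real m)\<^sup>2)"
  have "abel_norm (vp_c n m) (n + m) \<le> (\<Sum>k\<le>n + m. if k \<in> I then C else 0)"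
    unfolding abel_norm_def
  proof (rule sum_mono)
    fix k assume "k \<in> {..n + m}"
    then have "real (Suc k) \<le> real (n + m + 1)" by simp
    then have "real (Suc k) * \<bar>second_diff (vp_c n m) k\<bar> \<le> C"
      unfolding C_def using abs_second_diff_vp_c_le[OF assms(1)] by (intro mult_mono) auto
    then show "real (Suc k) * \<bar>second_diff (vp_c n m) k\<bar> \<le> (if k \<in> I then C else 0)"
      using second_diff_vp_c_eq_0[OF assms, of k] by (simp add: I_def)
  qed
  also have "\<dots> = real (card I) * C"
  proof -
    have "{..n + m} \<inter> I = I" by (auto simp: I_def)
    then show ?thesis by (simp add: sum.If_cases)
  qed
  also have "\<dots> = real (2 * m + 1) * real (n + m + 1) * (10 / (real m)\<^sup>2)"
    using assms by (simp add: I_def C_def)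
  also have "\<dots> \<le> (3 * real m) * (2 * real n) * (10 / (real m)\<^sup>2)"
    using assms by (intro mult_mono) auto
  also have "\<dots> = 60 * real n / real m"
    using assms by (simp add: power2_eq_square)
  finally show ?thesis .
qed

lemma vp_d_eq: "j \<le> m \<Longrightarrow> vp_d m j = d_profile (real m) (real j)"
  by (simp add: vp_d_def d_profile_def)

lemma abel_norm_vp_d_le:
  assumes "1 \<le> m"
  shows "abel_norm (vp_d m) m \<le> 13"
proof -
  have m: "0 < real m" using assms by simp
  have term_le: "real (Suc j) * \<bar>second_diff (vp_d m) j\<bar> \<le> 6 / real m + (if j = m - 1 then 1 else 0)"
    for j
  proof -
    consider "Suc (Suc j) \<le> m" | "j = m - 1" | "m \<le> j" using assms by linarith
    then show ?thesis
    proof cases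
      case 1
      then have "\<bar>second_diff (vp_d m) j\<bar> \<le> 6 / (real m)\<^sup>2"
        using abs_second_diff_d_profile_le[OF m, of "real j"] by (simp add: second_diff_def vp_d_eq add.commute)
      moreover have "real (Suc j) \<le> real m" using 1 by simp
      ultimately have "real (Suc j) * \<bar>second_diff (vp_d m) j\<bar> \<le> real m * (6 / (real m)\<^sup>2)"
        by (intro mult_mono) auto
      moreover have "j \<noteq> m - 1" using 1 by linarith
      ultimately show ?thesis using m by (simp add: power2_eq_square)
    next
      case 2
      have "real m * (2 * real m - 1) \<le> 2 * ((real m)\<^sup>2 + (real m - 1)\<^sup>2)"
        using sum_power2_ge_zero[of "real m - 3 / 4" 0] by (simp add: power2_eq_square algebra_simps)
      then have "real m * d_profile (real m) (real m - 1) \<le> 1"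
        using m by (simp add: d_profile_def field_simps add_pos_nonneg) (simp add: power2_eq_square algebra_simps)
      moreover have "0 \<le> d_profile (real m) (real m - 1)"
        unfolding d_profile_def using assms power_mono[of "real m - 1" "real m" 2]
        by (intro divide_nonneg_nonneg) auto
      ultimately have "real (Suc j) * \<bar>second_diff (vp_d m) j\<bar> \<le> 1"
        using 2 assms by (simp add: second_diff_def vp_d_eq vp_d_def of_nat_diff)
      moreover have "0 \<le> 6 / real m" by simp
      ultimately have "real (Suc j) * \<bar>second_diff (vp_d m) j\<bar> \<le> 6 / real m + 1" by linarith
      then show ?thesis using 2 by simp
    qed (simp add: second_diff_def vp_d_def)
  qed
  have "abel_norm (vp_d m) m \<le> (\<Sum>j\<le>m. 6 / real m + (if j = m - 1 then 1 else 0))"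
    unfolding abel_norm_def by (intro sum_mono term_le)
  also have "\<dots> = real (Suc m) * (6 / real m) + 1"
    using assms by (simp add: sum.distrib)
  also have "\<dots> \<le> 2 * real m * (6 / real m) + 1"
    using assms by (intro add_right_mono mult_right_mono) simp_all
  finally show ?thesis using m by simp
qed

section \<open>The kernel in terms of cosine polynomials\<close>

lemma cos_mult_cos_eq:
  fixes a t s :: real
  shows "cos (a * t) * cos (a * s) = (cos (a * (t - s)) + cos (a * (t + s))) / 2"
  by (simp only: cos_times_cos right_diff_distrib distrib_left)

lemma cos_mult_cos_cross_eq:
  fixes n j t s :: real
  shows "cos ((n - j) * t) * cos ((n + j) * s) + cos ((n + j) * t) * cos ((n - j) * s) =
    cos (n * (t - s)) * cos (j * (t + s)) + cos (n * (t + s)) * cos (j * (t - s))"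
proof -
  have "(n - j) * t = n * t - j * t" "(n + j) * s = n * s + j * s" "(n + j) * t = n * t + j * t"
    "(n - j) * s = n * s - j * s" "n * (t - s) = n * t - n * s" "j * (t + s) = j * t + j * s"
    "n * (t + s) = n * t + n * s" "j * (t - s) = j * t - j * s"
    by (simp_all add: algebra_simps)
  then show ?thesis by (simp add: cos_add cos_diff sin_add sin_diff algebra_simps)
qed

lemma pi_cheb_p_mult_cheb_p_cos:
  assumes "0 \<le> t" "t \<le> pi" "0 \<le> s" "s \<le> pi"
  shows "pi * (cheb_p r (cos t) * cheb_p r (cos s)) = cos_term r (t - s) + cos_term r (t + s)"
proof (cases "r = 0")
  case False
  have "pi * (cheb_p r (cos t) * cheb_p r (cos s))
      = pi * (sqrt (2 / pi) * sqrt (2 / pi)) * (cos (real r * t) * cos (real r * s))"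
    using assms False by (simp add: cheb_p_cos)
  also have "\<dots> = cos (real r * (t - s)) + cos (real r * (t + s))"
    by (simp add: cos_mult_cos_eq)
  finally show ?thesis using False by (simp add: cos_term_def)
qed (use assms in \<open>simp add: cheb_p_cos cos_term_def real_sqrt_mult[symmetric]\<close>)

lemma pi_vp_q_mult_vp_q_high:
  assumes "1 \<le> j" "j < m" "m < n" "0 \<le> t" "t \<le> pi" "0 \<le> s" "s \<le> pi"
  shows "pi * (vp_q n m (n - j) (cos t) * vp_q n m (n - j) (cos s) / vp_nu n m (n - j)) =
     vp_c n m (n - j) * (cos (real (n - j) * (t - s)) + cos (real (n - j) * (t + s)))
     + vp_c n m (n + j) * (cos (real (n + j) * (t - s)) + cos (real (n + j) * (t + s)))
     - 2 * vp_d m j * (cos (real n * (t - s)) * cos (real j * (t + s))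
                       + cos (real n * (t + s)) * cos (real j * (t - s)))"
proof -
  define a b where "a = n - j" and "b = n + j"
  define \<mu>\<^sub>1 \<mu>\<^sub>2 \<nu> where "\<mu>\<^sub>1 = (real m + real j) / (2 * real m)"
    and "\<mu>\<^sub>2 = (real m - real j) / (2 * real m)" and "\<nu> = ((real m)\<^sup>2 + (real j)\<^sup>2) / (2 * (real m)\<^sup>2)"
  have m: "0 < real m" using assms by simp
  have ab: "real a = real n - real j" "real b = real n + real j" "2 * n - a = b" "0 < a"
    using assms by (auto simp: a_def b_def of_nat_diff)
  have high: "\<not> real a \<le> real n - real m" "real n - real m < real a" "real a < real n + real m"
    using ab assms by auto
  have q: "vp_q n m a z = \<mu>\<^sub>1 * cheb_p a z - \<mu>\<^sub>2 * cheb_p b z" for z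
    using high ab assms by (simp add: vp_q_def vp_mu_def \<mu>\<^sub>1_def \<mu>\<^sub>2_def)
  have \<nu>: "vp_nu n m a = \<nu>" using high ab by (simp add: vp_nu_def \<nu>_def)
  have D: "0 < (real m)\<^sup>2 + (real j)\<^sup>2" using m by (simp add: add_pos_nonneg)
  have "vp_c n m a = c_profile (real m) (- real j)" using high ab by (simp add: vp_c_def)
  also have "\<dots> = \<mu>\<^sub>1\<^sup>2 / \<nu>"
    using m D by (simp add: c_profile_def \<mu>\<^sub>1_def \<nu>_def power_divide)
  finally have c_a: "\<mu>\<^sub>1\<^sup>2 / \<nu> = vp_c n m a" ..
  have "vp_c n m b = c_profile (real m) (real j)" using ab assms by (simp add: vp_c_def)
  also have "\<dots> = \<mu>\<^sub>2\<^sup>2 / \<nu>"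
    using m D by (simp add: c_profile_def \<mu>\<^sub>2_def \<nu>_def power_divide)
  finally have c_b: "\<mu>\<^sub>2\<^sup>2 / \<nu> = vp_c n m b" ..
  have "vp_d m j = d_profile (real m) (real j)" using assms by (simp add: vp_d_def)
  also have "\<dots> = \<mu>\<^sub>1 * \<mu>\<^sub>2 / \<nu>"
    using m D by (simp add: d_profile_def \<mu>\<^sub>1_def \<mu>\<^sub>2_def \<nu>_def divide_simps)
      (simp add: power2_eq_square algebra_simps)
  finally have d: "\<mu>\<^sub>1 * \<mu>\<^sub>2 / \<nu> = vp_d m j" ..
  have \<nu>_pos: "0 < \<nu>" using m D by (simp add: \<nu>_def)
  define \<sigma> where "\<sigma> = sqrt (2 / pi)"
  define A\<^sub>t A\<^sub>s B\<^sub>t B\<^sub>s where "A\<^sub>t = cos (real a * t)" and "A\<^sub>s = cos (real a * s)"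
    and "B\<^sub>t = cos (real b * t)" and "B\<^sub>s = cos (real b * s)"
  have "cheb_p a (cos t) = \<sigma> * A\<^sub>t" "cheb_p a (cos s) = \<sigma> * A\<^sub>s"
    "cheb_p b (cos t) = \<sigma> * B\<^sub>t" "cheb_p b (cos s) = \<sigma> * B\<^sub>s"
    using ab assms by (simp_all add: cheb_p_cos \<sigma>_def A\<^sub>t_def A\<^sub>s_def B\<^sub>t_def B\<^sub>s_def b_def)
  then have "pi * (vp_q n m a (cos t) * vp_q n m a (cos s) / vp_nu n m a)
      = pi * (\<sigma> * \<sigma>) / \<nu> * (\<mu>\<^sub>1\<^sup>2 * (A\<^sub>t * A\<^sub>s) + \<mu>\<^sub>2\<^sup>2 * (B\<^sub>t * B\<^sub>s) - \<mu>\<^sub>1 * \<mu>\<^sub>2 * (A\<^sub>t * B\<^sub>s + B\<^sub>t * A\<^sub>s))"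
    using \<nu>_pos by (simp add: q \<nu> field_simps power2_eq_square)
  also have "\<dots> = 2 * (\<mu>\<^sub>1\<^sup>2 / \<nu> * (A\<^sub>t * A\<^sub>s) + \<mu>\<^sub>2\<^sup>2 / \<nu> * (B\<^sub>t * B\<^sub>s) - \<mu>\<^sub>1 * \<mu>\<^sub>2 / \<nu> * (A\<^sub>t * B\<^sub>s + B\<^sub>t * A\<^sub>s))"
    by (simp add: \<sigma>_def diff_divide_distrib add_divide_distrib)
  also have "\<dots> = \<mu>\<^sub>1\<^sup>2 / \<nu> * (cos (real a * (t - s)) + cos (real a * (t + s)))
      + \<mu>\<^sub>2\<^sup>2 / \<nu> * (cos (real b * (t - s)) + cos (real b * (t + s)))
      - 2 * (\<mu>\<^sub>1 * \<mu>\<^sub>2 / \<nu>) * (cos (real n * (t - s)) * cos (real j * (t + s))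
                              + cos (real n * (t + s)) * cos (real j * (t - s)))"
    unfolding A\<^sub>t_def A\<^sub>s_def B\<^sub>t_def B\<^sub>s_def cos_mult_cos_eq ab(1,2) cos_mult_cos_cross_eq
    using \<nu>_pos by (simp add: field_simps)
  finally show ?thesis unfolding c_a c_b d a_def b_def .
qed

lemma sum_lessThan_split_top:
  fixes f :: "nat \<Rightarrow> 'a::comm_monoid_add"
  assumes "0 < m" "m < n"
  shows "(\<Sum>r<n. f r) = (\<Sum>r\<le>n - m. f r) + (\<Sum>j\<in>{1..<m}. f (n - j))"
proof -
  have "{..<n} = {..n - m} \<union> {n - m<..<n}" using assms by auto
  then have "(\<Sum>r<n. f r) = (\<Sum>r\<le>n - m. f r) + (\<Sum>r\<in>{n - m<..<n}. f r)"
    by (simp add: sum.union_disjoint ivl_disj_int)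
  also have "(\<Sum>r\<in>{n - m<..<n}. f r) = (\<Sum>j\<in>{1..<m}. f (n - j))"
    by (rule sum.reindex_bij_witness[where i="\<lambda>r. n - r" and j="\<lambda>j. n - j"]) (use assms in auto)
  finally show ?thesis .
qed

lemma sum_atMost_split_around:
  fixes f :: "nat \<Rightarrow> 'a::comm_monoid_add"
  assumes "0 < m" "m < n"
  shows "(\<Sum>k\<le>n + m. f k) =
    (\<Sum>r\<le>n - m. f r) + (\<Sum>j\<in>{1..<m}. f (n - j) + f (n + j)) + f n + f (n + m)"
proof -
  have "{..n + m} = insert (n + m) (insert n ({..<n} \<union> {n<..<n + m}))" using assms by auto
  moreover have "{..<n} \<inter> {n<..<n + m} = {}" by auto
  ultimately have "(\<Sum>k\<le>n + m. f k) = (\<Sum>r<n. f r) + f n + (\<Sum>k\<in>{n<..<n + m}. f k) + f (n + m)"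
    using assms by (simp add: sum.union_disjoint ac_simps)
  also have "(\<Sum>k\<in>{n<..<n + m}. f k) = (\<Sum>j\<in>{1..<m}. f (n + j))"
    by (rule sum.reindex_bij_witness[where i="\<lambda>j. n + j" and j="\<lambda>k. k - n"]) auto
  finally show ?thesis using assms by (simp add: sum_lessThan_split_top sum.distrib ac_simps)
qed

lemma pi_vp_kernel_cos_eq:
  assumes "1 \<le> m" "m < n" "0 \<le> t" "t \<le> pi" "0 \<le> s" "s \<le> pi"
  shows "pi * vp_kernel n m (cos t) (cos s) =
     cos_poly (vp_c n m) (n + m) (t - s) + cos_poly (vp_c n m) (n + m) (t + s)
     - 2 * cos (real n * (t - s)) * cos_poly (vp_d m) m (t + s)
     - 2 * cos (real n * (t + s)) * cos_poly (vp_d m) m (t - s)"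
proof -
  define u v where "u = t - s" and "v = t + s"
  define L where "L w = (\<Sum>r\<le>n - m. cos_term r w)" for w
  define H where "H w = (\<Sum>j\<in>{1..<m}. vp_c n m (n - j) * cos (real (n - j) * w)
                                      + vp_c n m (n + j) * cos (real (n + j) * w))" for w
  define G where "G w = (\<Sum>j\<in>{1..<m}. vp_d m j * cos (real j * w))" for w
  have m: "0 < m" "0 < real m" using assms by auto
  have "pi * vp_kernel n m (cos t) (cos s)
      = (\<Sum>r\<le>n - m. pi * (vp_q n m r (cos t) * vp_q n m r (cos s) / vp_nu n m r))
      + (\<Sum>j\<in>{1..<m}. pi * (vp_q n m (n - j) (cos t) * vp_q n m (n - j) (cos s) / vp_nu n m (n - j)))"
    unfolding vp_kernel_eq_sum sum_distrib_left by (rule sum_lessThan_split_top[OF m(1) assms(2)])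
  also have "(\<Sum>r\<le>n - m. pi * (vp_q n m r (cos t) * vp_q n m r (cos s) / vp_nu n m r)) = L u + L v"
    unfolding L_def u_def v_def sum.distrib[symmetric]
  proof (rule sum.cong)
    fix r assume "r \<in> {..n - m}"
    then have "real r \<le> real n - real m" using assms by (simp add: of_nat_diff)
    then show "pi * (vp_q n m r (cos t) * vp_q n m r (cos s) / vp_nu n m r)
        = cos_term r (t - s) + cos_term r (t + s)"
      using pi_cheb_p_mult_cheb_p_cos[OF assms(3-6)] by (simp add: vp_q_def vp_nu_def)
  qed simp
  also have "(\<Sum>j\<in>{1..<m}. pi * (vp_q n m (n - j) (cos t) * vp_q n m (n - j) (cos s) / vp_nu n m (n - j)))
      = H u + H v - 2 * cos (real n * u) * G v - 2 * cos (real n * v) * G u"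
    unfolding H_def G_def u_def v_def sum_distrib_left sum.distrib[symmetric] sum_subtractf[symmetric]
    using assms by (intro sum.cong refl, subst pi_vp_q_mult_vp_q_high) (auto simp: algebra_simps)
  also have "cos_poly (vp_c n m) (n + m) w = L w + H w + cos (real n * w) / 2" for w
  proof -
    have "vp_c n m r = 1" if "r \<le> n - m" for r
      using that assms by (simp add: vp_c_def of_nat_diff)
    moreover have "vp_c n m n = 1 / 2" "vp_c n m (n + m) = 0"
      using m by (simp_all add: vp_c_def c_profile_def)
    ultimately show ?thesis
      unfolding cos_poly_def sum_atMost_split_around[OF m(1) assms(2)] L_def H_def
      using assms by (simp add: cos_term_def)
  qed
  moreover have "cos_poly (vp_d m) m w = 1 / 4 + G w" for w
  proof -
    have "{..m} = insert 0 (insert m {1..<m})" using m by auto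
    then show ?thesis
      using m by (simp add: cos_poly_def G_def vp_d_def d_profile_def cos_term_def)
  qed
  ultimately show ?thesis unfolding u_def v_def by (simp add: algebra_simps)
qed

section \<open>The Lebesgue constant\<close>

lemma continuous_on_cheb_p: "continuous_on {-1..1} (cheb_p r)"
  unfolding cheb_p_def by (cases "r = 0") (auto intro!: continuous_intros)

lemma continuous_on_vp_q: "continuous_on {-1..1} (vp_q n m r)"
  unfolding vp_q_def
  by (cases "real r \<le> real n - real m") (auto intro!: continuous_intros continuous_on_cheb_p)

lemma continuous_on_vp_kernel: "continuous_on {-1..1} (vp_kernel n m x)"
  unfolding vp_kernel_eq_sum
  by (intro continuous_intros continuous_on_vp_q) (auto dest!: vp_nu_pos[of _ n m])

lemma cheb_w_neg_cos_mult_sin: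
  assumes "0 \<le> s" "s \<le> pi"
  shows "cheb_w (- cos s) * sin s = (if sin s = 0 then 0 else 1)"
proof -
  have "0 \<le> sin s" using assms by (simp add: sin_ge_zero)
  moreover have "1 - (- cos s)\<^sup>2 = (sin s)\<^sup>2" by (simp add: sin_squared_eq)
  ultimately show ?thesis by (simp add: cheb_w_def)
qed

lemma pi_abs_vp_kernel_le:
  assumes "1 \<le> m" "m < n" "0 \<le> t" "t \<le> pi" "0 \<le> s" "s \<le> pi"
  defines "C \<equiv> cos_poly (vp_c n m) (n + m)" and "D \<equiv> cos_poly (vp_d m) m"
  shows "pi * \<bar>vp_kernel n m (cos t) (- cos s)\<bar> \<le>
    \<bar>C (s + (t - pi))\<bar> + \<bar>C (s + (- t - pi))\<bar> + 2 * \<bar>D (s + (t - pi))\<bar> + 2 * \<bar>D (s + (- t - pi))\<bar>"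
proof -
  define \<alpha> \<beta> where "\<alpha> = real n * (t - (pi - s))" and "\<beta> = real n * (t + (pi - s))"
  have "pi * vp_kernel n m (cos t) (- cos s) = pi * vp_kernel n m (cos t) (cos (pi - s))" by simp
  also have "\<dots> = C (s + (t - pi)) + C (s + (- t - pi))
      - 2 * (cos \<alpha> * D (s + (- t - pi))) - 2 * (cos \<beta> * D (s + (t - pi)))"
    using pi_vp_kernel_cos_eq[of m n t "pi - s"] assms cos_poly_minus[of _ _ "s + (- t - pi)"]
    by (simp add: C_def D_def \<alpha>_def \<beta>_def algebra_simps)
  finally have eq: "pi * \<bar>vp_kernel n m (cos t) (- cos s)\<bar> = \<bar>\<dots>\<bar>"
    by (metis abs_mult abs_of_pos pi_gt_zero)
  have "\<bar>cos \<gamma> * X\<bar> \<le> \<bar>X\<bar>" for \<gamma> X :: real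
    unfolding abs_mult by (intro mult_left_le_one_le) auto
  then have "\<bar>cos \<alpha> * D (s + (- t - pi))\<bar> \<le> \<bar>D (s + (- t - pi))\<bar>"
    "\<bar>cos \<beta> * D (s + (t - pi))\<bar> \<le> \<bar>D (s + (t - pi))\<bar>" by auto
  then show ?thesis
    using abs_ge_self[of "C (s + (t - pi))"] abs_ge_minus_self[of "C (s + (t - pi))"]
      abs_ge_self[of "C (s + (- t - pi))"] abs_ge_minus_self[of "C (s + (- t - pi))"]
    unfolding eq abs_le_iff by linarith
qed

lemma set_borel_measurable_abs_vp_kernel_cheb_w:
  "set_borel_measurable borel {-1..1} (\<lambda>y. \<bar>vp_kernel n m x y\<bar> * cheb_w y)"
proof -
  have "(\<lambda>y. indicator {-1..1::real} y *\<^sub>R \<bar>vp_kernel n m x y\<bar>) \<in> borel_measurable borel"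
    by (intro borel_measurable_continuous_on_indicator continuous_intros continuous_on_vp_kernel) auto
  moreover have "cheb_w \<in> borel_measurable borel"
    unfolding cheb_w_def by measurable
  ultimately have "(\<lambda>y. (indicator {-1..1::real} y *\<^sub>R \<bar>vp_kernel n m x y\<bar>) * cheb_w y)
      \<in> borel_measurable borel"
    by (rule borel_measurable_times)
  then show ?thesis
    unfolding set_borel_measurable_def by (simp add: mult.assoc)
qed

lemma nn_integral_abs_vp_kernel_le:
  assumes "1 \<le> m" "m < n" "x \<in> {-1..1}"
  shows "(\<integral>\<^sup>+ y. ennreal (\<bar>vp_kernel n m x y\<bar> * cheb_w y) * indicator {-1..1} y \<partial>lborel)
    \<le> ennreal (2 * abel_norm (vp_c n m) (n + m) + 4 * abel_norm (vp_d m) m)"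
proof -
  define t where "t = arccos x"
  have t: "0 \<le> t" "t \<le> pi" "cos t = x"
    using assms(3) by (auto simp: t_def arccos_lbound arccos_ubound cos_arccos)
  define C D where "C = cos_poly (vp_c n m) (n + m)" and "D = cos_poly (vp_d m) m"
  define J where "J P b = integral {0..pi} (\<lambda>s. \<bar>P (s + b)\<bar>)" for P :: "real \<Rightarrow> real" and b
  define b\<^sub>1 b\<^sub>2 where "b\<^sub>1 = t - pi" and "b\<^sub>2 = - t - pi"
  define B where "B s = (\<bar>C (s + b\<^sub>1)\<bar> + \<bar>C (s + b\<^sub>2)\<bar> + 2 * \<bar>D (s + b\<^sub>1)\<bar> + 2 * \<bar>D (s + b\<^sub>2)\<bar>) / pi" for s
  define f where "f y = \<bar>vp_kernel n m x y\<bar> * cheb_w y" for y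
  have "((\<lambda>s. \<bar>P (s + b)\<bar>) has_integral J P b) {0..pi}" if "P = C \<or> P = D" for P b
    using that unfolding J_def C_def D_def
    by (auto intro!: integrable_integral integrable_continuous_interval continuous_intros)
  then have B_int: "(B has_integral (J C b\<^sub>1 + J C b\<^sub>2 + 2 * J D b\<^sub>1 + 2 * J D b\<^sub>2) / pi) {0..pi}"
    unfolding B_def by (intro has_integral_divide has_integral_add has_integral_mult_right) auto
  have "J C b \<le> pi * abel_norm (vp_c n m) (n + m)" for b
    unfolding J_def C_def by (rule integral_abs_cos_poly_le) (simp_all add: vp_c_def)
  moreover have "J D b \<le> pi * abel_norm (vp_d m) m" for b
    unfolding J_def D_def by (rule integral_abs_cos_poly_le) (simp_all add: vp_d_def)
  ultimately have "J C b\<^sub>1 + J C b\<^sub>2 + 2 * J D b\<^sub>1 + 2 * J D b\<^sub>2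
      \<le> 2 * (pi * abel_norm (vp_c n m) (n + m)) + 4 * (pi * abel_norm (vp_d m) m)"
    by (smt (verit))
  then have B_le: "(J C b\<^sub>1 + J C b\<^sub>2 + 2 * J D b\<^sub>1 + 2 * J D b\<^sub>2) / pi
      \<le> 2 * abel_norm (vp_c n m) (n + m) + 4 * abel_norm (vp_d m) m"
    by (simp add: pos_divide_le_eq algebra_simps)
  have "(\<integral>\<^sup>+ y. ennreal (f y) * indicator {-1..1} y \<partial>lborel)
      = (\<integral>\<^sup>+ y. ennreal (f y * indicator {- cos 0..- cos pi} y) \<partial>lborel)"
    by (intro nn_integral_cong) (simp split: split_indicator)
  \<comment> \<open>substitute \<open>y = - cos s\<close>, which is increasing on \<open>[0, pi]\<close> as the substitution rule requires\<close>
  also have "\<dots> = (\<integral>\<^sup>+ s. ennreal (f (- cos s) * sin s * indicator {0..pi} s) \<partial>lborel)"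
    using set_borel_measurable_abs_vp_kernel_cheb_w[of n m x]
    by (intro nn_integral_substitution) (auto simp: f_def sin_ge_zero intro!: derivative_eq_intros continuous_intros)
  also have "\<dots> \<le> (\<integral>\<^sup>+ s. ennreal (B s) * indicator {0..pi} s \<partial>lborel)"
  proof (intro nn_integral_mono)
    fix s :: real
    show "ennreal (f (- cos s) * sin s * indicator {0..pi} s) \<le> ennreal (B s) * indicator {0..pi} s"
    proof (cases "s \<in> {0..pi}")
      case True
      then have "f (- cos s) * sin s \<le> \<bar>vp_kernel n m x (- cos s)\<bar>"
        using cheb_w_neg_cos_mult_sin[of s] by (auto simp: f_def mult.assoc)
      also have "\<dots> \<le> B s"
        using pi_abs_vp_kernel_le[OF assms(1,2) t(1,2), of s] True
        by (simp add: B_def C_def D_def b\<^sub>1_def b\<^sub>2_def t(3) field_simps)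
      finally show ?thesis using True by (simp add: ennreal_leI)
    qed simp
  qed
  also have "\<dots> = ennreal ((J C b\<^sub>1 + J C b\<^sub>2 + 2 * J D b\<^sub>1 + 2 * J D b\<^sub>2) / pi)"
    by (rule nn_integral_has_integral_lebesgue'[OF _ B_int]) (simp add: B_def)
  also have "\<dots> \<le> ennreal (2 * abel_norm (vp_c n m) (n + m) + 4 * abel_norm (vp_d m) m)"
    using B_le by (rule ennreal_leI)
  finally show ?thesis unfolding f_def .
qed

lemma vp_Lambda_le:
  assumes "1 \<le> m" "m < n"
  shows "vp_Lambda n m \<le> ennreal (120 * real n / real m + 52)"
  unfolding vp_Lambda_def
proof (rule SUP_least)
  fix x :: real assume "x \<in> {-1..1}"
  then have "(\<integral>\<^sup>+ y. ennreal (\<bar>vp_kernel n m x y\<bar> * cheb_w y) * indicator {-1..1} y \<partial>lborel)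
      \<le> ennreal (2 * abel_norm (vp_c n m) (n + m) + 4 * abel_norm (vp_d m) m)"
    by (rule nn_integral_abs_vp_kernel_le[OF assms])
  also have "\<dots> \<le> ennreal (120 * real n / real m + 52)"
    using abel_norm_vp_c_le[OF assms] abel_norm_vp_d_le[OF assms(1)] by (intro ennreal_leI) simp
  finally show "(\<integral>\<^sup>+ y. ennreal (\<bar>vp_kernel n m x y\<bar> * cheb_w y) * indicator {-1..1} y \<partial>lborel)
      \<le> ennreal (120 * real n / real m + 52)" .
qed

lemma nat_floor_mult_bounds:
  fixes \<theta> :: real
  assumes "0 < \<theta>" "\<theta> < 1" "1 \<le> \<lfloor>\<theta> * real n\<rfloor>"
  defines "m \<equiv> nat \<lfloor>\<theta> * real n\<rfloor>"
  shows "1 \<le> m" "m < n" "real n / real m \<le> 2 / \<theta>"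
proof -
  have m: "real m = of_int \<lfloor>\<theta> * real n\<rfloor>" using assms(3) by (simp add: m_def)
  then have "1 \<le> real m" "real m \<le> \<theta> * real n" "\<theta> * real n < real m + 1"
    using assms(3) of_int_floor_le[of "\<theta> * real n"] real_of_int_floor_add_one_gt[of "\<theta> * real n"]
    by linarith+
  moreover have "0 < real n"
    using \<open>1 \<le> real m\<close> \<open>real m \<le> \<theta> * real n\<close> by (cases "n = 0") auto
  then have "\<theta> * real n < 1 * real n" by (rule mult_strict_right_mono[OF assms(2)])
  moreover have "real n / real m \<le> 2 / \<theta> \<longleftrightarrow> \<theta> * real n \<le> 2 * real m"
    using assms(1) \<open>1 \<le> real m\<close> by (simp add: field_simps)
  ultimately show "1 \<le> m" "m < n" "real n / real m \<le> 2 / \<theta>"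
    by linarith+
qed

theorem theorem1:
  fixes \<theta> :: real
  assumes "0 < \<theta>" and "\<theta> < 1"
  shows "(SUP n\<in>{n::nat. \<lfloor>\<theta> * real n\<rfloor> \<ge> 1}. vp_Lambda n (nat \<lfloor>\<theta> * real n\<rfloor>)) < \<infinity>"
proof -
  have "vp_Lambda n (nat \<lfloor>\<theta> * real n\<rfloor>) \<le> ennreal (240 / \<theta> + 52)" if "\<lfloor>\<theta> * real n\<rfloor> \<ge> 1" for n
  proof -
    note m = nat_floor_mult_bounds[OF assms that]
    have "vp_Lambda n (nat \<lfloor>\<theta> * real n\<rfloor>) \<le> ennreal (120 * (real n / real (nat \<lfloor>\<theta> * real n\<rfloor>)) + 52)"
      using vp_Lambda_le[OF m(1,2)] by simp
    also have "\<dots> \<le> ennreal (240 / \<theta> + 52)"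
      using m(3) by (intro ennreal_leI) simp
    finally show ?thesis .
  qed
  then have "(SUP n\<in>{n::nat. \<lfloor>\<theta> * real n\<rfloor> \<ge> 1}. vp_Lambda n (nat \<lfloor>\<theta> * real n\<rfloor>)) \<le> ennreal (240 / \<theta> + 52)"
    by (intro SUP_least) simp
  also have "\<dots> < \<infinity>" by simp
  finally show ?thesis .
qed

end
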